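(* Let $\mu>1$ be a Salem number of degree four, $K=\mathbb{Q}(\mu+\mu^{-1})$, and let $\tau$ be an embedding of $\mathbb{Q}(\mu)$ into $\mathbb{C}$ whose restriction to $K$ is the nontrivial embedding of $K$ (so $\tau(\mu)=e^{i\nu}$ for some $\nu\in(0,\pi)$, choosing $\tau$ appropriately). Suppose there is $D\in\mathcal{O}_K$ with $\mathbb{Q}(\mu)=K(\sqrt D)$ and $\mu=t+u\sqrt D$ with $t,u\in\mathcal{O}_K$. Then there exists $m\in\{0,1,2\}$ such that $\mu^{m+1}=t_m+u_m\sqrt D$ with $t_m,u_m\in\mathcal{O}_K$ and $\tau(t_m)^2>\tfrac12$.
   Context: A Salem number is a real algebraic integer $\lambda>1$ such that $\lambda^{-1}$ is a Galois conjugate of $\lambda$ and all other conjugates of $\lambda$ lie on the unit circle. $\mathcal{O}_K$ is the ring of integers of $K$. *)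

theory Defs
  imports "HOL-Analysis.Analysis" "HOL-Computational_Algebra.Computational_Algebra"
begin

definition is_subfield :: "complex set \<Rightarrow> bool" where
  "is_subfield F \<longleftrightarrow> 0 \<in> F \<and> 1 \<in> F \<and>
     (\<forall>x\<in>F. \<forall>y\<in>F. x + y \<in> F \<and> x * y \<in> F) \<and>
     (\<forall>x\<in>F. - x \<in> F) \<and> (\<forall>x\<in>F. x \<noteq> 0 \<longrightarrow> inverse x \<in> F)"

definition gen_field :: "complex set \<Rightarrow> complex set" where
  "gen_field A = \<Inter>{F. is_subfield F \<and> A \<subseteq> F}"

definition ring_of_integers :: "complex set \<Rightarrow> complex set" where
  "ring_of_integers F = {x \<in> F. algebraic_int x}"

definition min_poly_rat :: "rat poly \<Rightarrow> complex \<Rightarrow> bool" where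
  "min_poly_rat p x \<longleftrightarrow> irreducible p \<and> lead_coeff p = 1 \<and>
      poly (map_poly of_rat p) x = 0"

definition conjugates :: "complex \<Rightarrow> complex set" where
  "conjugates x = {z. \<exists>p. min_poly_rat p x \<and> poly (map_poly of_rat p) z = 0}"

definition salem_number :: "complex \<Rightarrow> bool" where
  "salem_number x \<longleftrightarrow> x \<in> \<real> \<and> 1 < Re x \<and> algebraic_int x \<and>
     inverse x \<in> conjugates x \<and>
     (\<forall>z \<in> conjugates x. z \<noteq> x \<longrightarrow> z \<noteq> inverse x \<longrightarrow> cmod z = 1)"

definition alg_degree :: "complex \<Rightarrow> nat" where
  "alg_degree x = (THE n. \<exists>p. min_poly_rat p x \<and> degree p = n)"

definition field_embedding :: "complex set \<Rightarrow> (complex \<Rightarrow> complex) \<Rightarrow> bool" where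
  "field_embedding F \<tau> \<longleftrightarrow> \<tau> 1 = 1 \<and>
     (\<forall>x\<in>F. \<forall>y\<in>F. \<tau> (x + y) = \<tau> x + \<tau> y \<and> \<tau> (x * y) = \<tau> x * \<tau> y)"

end

(*
  Let z = tau(mu). Since tau does not fix K = Q(mu + 1/mu), z is a conjugate of mu other than
  mu and 1/mu, so |z| = 1 and tau(mu + 1/mu) = 2 Re z is real. As z is not real, mu and hence s
  lie outside K, and comparing the coefficients of mu^2 - (mu + 1/mu) mu + 1 = 0 with respect to
  1, s gives mu + 1/mu = 2t. Thus 1/mu = t - u s, so the coordinates of mu^(m+1) = t_m + u_m s
  satisfy 2 t_m = mu^(m+1) + mu^-(m+1) and tau(t_m) = Re (z^(m+1)) = cos((m+1) nu); they are
  algebraic integers because they are integer polynomials in t, u and D. Finally, cos^2 nu,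
  cos^2 2nu and cos^2 3nu can all be at most 1/2 only if cos^2 nu = 1/2, i.e. z^4 = -1, which
  is impossible because mu^4 is a real number greater than 1.
*)
theory Submission
  imports Defs "Jordan_Normal_Form.Char_Poly"
begin

section \<open>Integrality by the determinant trick\<close>

definition int_span :: "'a :: comm_ring_1 set \<Rightarrow> 'a set" where
  "int_span G = {w. \<exists>c :: 'a \<Rightarrow> int. w = (\<Sum>g\<in>G. of_int (c g) * g)}"

lemma int_span_0: "0 \<in> int_span G"
  unfolding int_span_def by (auto intro!: exI[of _ "\<lambda>_. 0"])

lemma int_span_add:
  assumes "a \<in> int_span G" "b \<in> int_span G"
  shows "a + b \<in> int_span G"
proof -
  obtain c d where "a = (\<Sum>g\<in>G. of_int (c g) * g)" "b = (\<Sum>g\<in>G. of_int (d g) * g)"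
    using assms unfolding int_span_def by blast
  hence "a + b = (\<Sum>g\<in>G. of_int (c g + d g) * g)" by (simp add: sum.distrib distrib_right)
  thus ?thesis unfolding int_span_def by (intro CollectI exI[of _ "\<lambda>g. c g + d g"])
qed

lemma int_span_of_int_mult:
  assumes "a \<in> int_span G"
  shows "of_int k * a \<in> int_span G"
proof -
  obtain c where "a = (\<Sum>g\<in>G. of_int (c g) * g)" using assms unfolding int_span_def by blast
  hence "of_int k * a = (\<Sum>g\<in>G. of_int (k * c g) * g)" by (simp add: sum_distrib_left mult.assoc)
  thus ?thesis unfolding int_span_def by (intro CollectI exI[of _ "\<lambda>g. k * c g"])
qed

lemma int_span_sum:
  "finite I \<Longrightarrow> (\<And>i. i \<in> I \<Longrightarrow> f i \<in> int_span G) \<Longrightarrow> sum f I \<in> int_span G"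
  by (induction I rule: finite_induct) (auto intro: int_span_add int_span_0)

lemma int_span_superset:
  assumes "finite G" "g \<in> G"
  shows "g \<in> int_span G"
proof -
  have "(\<Sum>h\<in>G. of_int (if h = g then 1 else 0) * h) = (\<Sum>h\<in>G. if h = g then h else 0)"
    by (rule sum.cong) auto
  also have "\<dots> = g" using assms by (simp add: sum.delta)
  finally show ?thesis unfolding int_span_def
    by (intro CollectI exI[of _ "\<lambda>h. if h = g then 1 else 0"]) simp
qed

lemma int_span_mult:
  assumes "finite G" "\<And>g. g \<in> G \<Longrightarrow> x * g \<in> int_span G" "a \<in> int_span G"
  shows "x * a \<in> int_span G"
proof -
  obtain c where "a = (\<Sum>g\<in>G. of_int (c g) * g)" using assms(3) unfolding int_span_def by blast
  hence "x * a = (\<Sum>g\<in>G. of_int (c g) * (x * g))" by (simp add: sum_distrib_left algebra_simps)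
  also have "\<dots> \<in> int_span G" using assms by (intro int_span_sum int_span_of_int_mult) auto
  finally show ?thesis .
qed

lemma algebraic_int_eigenvalue:
  fixes A :: "int mat" and v :: "'a :: field_char_0 vec"
  assumes A: "A \<in> carrier_mat n n" and v: "v \<in> carrier_vec n" "v \<noteq> 0\<^sub>v n"
    and eigen: "map_mat of_int A *\<^sub>v v = z \<cdot>\<^sub>v v"
  shows "algebraic_int z"
proof -
  have B: "map_mat of_int A \<in> carrier_mat n n" using A by simp
  have "eigenvalue (map_mat of_int A) z"
    using B v eigen unfolding eigenvalue_def eigenvector_def by blast
  hence "poly (char_poly (map_mat of_int A)) z = 0"
    using eigenvalue_root_char_poly[OF B] by blast
  hence "poly (map_poly of_int (char_poly A)) z = 0"
    by (simp add: of_int_hom.char_poly_hom[OF A])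
  moreover have "lead_coeff (char_poly A) = 1" using degree_monic_char_poly[OF A] by simp
  ultimately show ?thesis unfolding algebraic_int_altdef_ipoly by blast
qed

lemma algebraic_int_if_int_span_stable:
  fixes z :: "'a :: field_char_0"
  assumes G: "finite G" "g\<^sub>0 \<in> G" "g\<^sub>0 \<noteq> 0"
    and stable: "\<And>g. g \<in> G \<Longrightarrow> z * g \<in> int_span G"
  shows "algebraic_int z"
proof -
  obtain xs where xs: "set xs = G" "distinct xs" using finite_distinct_list[OF G(1)] by blast
  define n where "n = length xs"
  have sum_G: "(\<Sum>g\<in>G. f g) = (\<Sum>l<n. f (xs ! l))" for f :: "'a \<Rightarrow> 'a"
  proof -
    have "(\<Sum>g\<in>G. f g) = sum_list (map f xs)" using xs by (simp add: sum_list_distinct_conv_sum_set)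
    also have "\<dots> = (\<Sum>l<n. f (xs ! l))" unfolding n_def
      by (simp add: sum_list_sum_nth atLeast0LessThan)
    finally show ?thesis .
  qed
  have "\<forall>k\<in>{..<n}. \<exists>c. z * xs ! k = (\<Sum>g\<in>G. of_int (c g) * g)"
    using stable xs(1) unfolding int_span_def n_def by auto
  then obtain c where c: "\<forall>k\<in>{..<n}. z * xs ! k = (\<Sum>g\<in>G. of_int (c k g) * g)"
    by (rule bchoice[THEN exE]) blast
  define A where "A = mat n n (\<lambda>(k, l). c k (xs ! l))"
  define v where "v = vec n (\<lambda>k. xs ! k)"
  show ?thesis
  proof (rule algebraic_int_eigenvalue)
    show "A \<in> carrier_mat n n" "v \<in> carrier_vec n" by (simp_all add: A_def v_def)
    obtain k where "k < n" "xs ! k = g\<^sub>0" using G(2) xs(1) unfolding n_def by (metis in_set_conv_nth)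
    then show "v \<noteq> 0\<^sub>v n" using G(3) unfolding v_def by (metis index_vec index_zero_vec(1))
    show "map_mat of_int A *\<^sub>v v = z \<cdot>\<^sub>v v"
    proof (rule eq_vecI)
      fix k assume "k < dim_vec (z \<cdot>\<^sub>v v)"
      hence k: "k < n" by (simp add: v_def)
      have "(map_mat of_int A *\<^sub>v v) $ k = (\<Sum>l<n. of_int (c k (xs ! l)) * xs ! l)"
        using k by (simp add: A_def v_def mult_mat_vec_def scalar_prod_def atLeast0LessThan)
      also have "\<dots> = z * xs ! k" using c k sum_G by simp
      finally show "(map_mat of_int A *\<^sub>v v) $ k = (z \<cdot>\<^sub>v v) $ k" using k by (simp add: v_def)
    qed (simp add: A_def v_def)
  qed
qed

lemma algebraic_int_monic_relation:
  fixes x :: "'a :: field_char_0"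
  assumes "algebraic_int x"
  obtains n a where "n > 0" "x ^ n = (\<Sum>r<n. of_int (a r) * x ^ r)"
proof -
  obtain p where p: "poly (map_poly of_int p) x = 0" "lead_coeff p = 1"
    using assms unfolding algebraic_int_altdef_ipoly by blast
  define n where "n = degree p"
  have "0 = (\<Sum>i\<le>n. of_int (coeff p i) * x ^ i)"
    using p(1) by (simp add: poly_altdef n_def degree_map_poly coeff_map_poly)
  also have "\<dots> = x ^ n + (\<Sum>i<n. of_int (coeff p i) * x ^ i)"
    using p(2) by (simp add: lessThan_Suc_atMost[symmetric] n_def)
  finally have rel: "x ^ n = (\<Sum>r<n. of_int (- coeff p r) * x ^ r)"
    by (simp add: sum_negf eq_neg_iff_add_eq_0 add.commute)
  have "n > 0"
    using rel by (intro Nat.gr0I) simp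
  from this rel show ?thesis by (rule that)
qed

lemma int_span_monomials_mult:
  fixes x y :: "'a :: comm_ring_1"
  assumes "x ^ n = (\<Sum>r<n. of_int (a r) * x ^ r)"
    and G: "G = (\<lambda>(i, j). x ^ i * y ^ j) ` ({..<n} \<times> {..<m})" and "g \<in> G"
  shows "x * g \<in> int_span G"
proof -
  have G_mem: "x ^ i * y ^ j \<in> int_span G" if "i < n" "j < m" for i j
    using that by (intro int_span_superset) (auto simp: G)
  obtain i j where ij: "i < n" "j < m" "g = x ^ i * y ^ j" using \<open>g \<in> G\<close> G by auto
  show ?thesis
  proof (cases "Suc i < n")
    case True
    then show ?thesis using G_mem[of "Suc i" j] ij by (simp add: mult.assoc)
  next
    case False
    with ij have "Suc i = n" by simp
    with ij have "x * g = x ^ n * y ^ j" by (simp add: mult.assoc[symmetric] flip: power_Suc)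
    also have "\<dots> = (\<Sum>r<n. of_int (a r) * (x ^ r * y ^ j))"
      by (simp add: assms(1) sum_distrib_right mult.assoc)
    also have "\<dots> \<in> int_span G"
      using ij by (intro int_span_sum int_span_of_int_mult G_mem) auto
    finally show ?thesis .
  qed
qed

lemma algebraic_int_mult_add:
  fixes x y :: "'a :: field_char_0"
  assumes "algebraic_int x" "algebraic_int y"
  shows "algebraic_int (x * y)" "algebraic_int (x + y)"
proof -
  obtain n a where n: "n > 0" "x ^ n = (\<Sum>r<n. of_int (a r) * x ^ r)"
    using algebraic_int_monic_relation[OF assms(1)] .
  obtain m b where m: "m > 0" "y ^ m = (\<Sum>r<m. of_int (b r) * y ^ r)"
    using algebraic_int_monic_relation[OF assms(2)] .
  define G where "G = (\<lambda>(i, j). x ^ i * y ^ j) ` ({..<n} \<times> {..<m})"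
  have G_swap: "G = (\<lambda>(i, j). y ^ i * x ^ j) ` ({..<m} \<times> {..<n})"
    unfolding G_def by (auto simp: mult.commute)
  have G: "finite G" "1 \<in> G"
    using n(1) m(1) unfolding G_def by (auto intro!: image_eqI[of _ _ "(0, 0)"])
  have x: "x * g \<in> int_span G" and y: "y * g \<in> int_span G" if "g \<in> G" for g
    using int_span_monomials_mult[OF n(2) G_def that] int_span_monomials_mult[OF m(2) G_swap that]
    by auto
  show "algebraic_int (x * y)"
    using G by (rule algebraic_int_if_int_span_stable)
      (auto simp: mult.assoc intro: int_span_mult[OF G(1) x y])
  show "algebraic_int (x + y)"
    using G by (rule algebraic_int_if_int_span_stable)
      (auto simp: distrib_right intro: int_span_add x y)
qed

section \<open>Subfields of the complex numbers and their embeddings\<close>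

lemma is_subfield_gen_field: "is_subfield (gen_field A)"
  unfolding gen_field_def is_subfield_def by auto

lemma gen_field_superset: "A \<subseteq> gen_field A"
  unfolding gen_field_def by auto

lemma gen_field_least: "is_subfield F \<Longrightarrow> A \<subseteq> F \<Longrightarrow> gen_field A \<subseteq> F"
  unfolding gen_field_def by auto

locale subfield =
  fixes F :: "complex set"
  assumes is_subfield: "is_subfield F"
begin

lemma zero_mem [simp]: "0 \<in> F"
  and one_mem [simp]: "1 \<in> F"
  and add_mem [simp]: "x \<in> F \<Longrightarrow> y \<in> F \<Longrightarrow> x + y \<in> F"
  and mult_mem [simp]: "x \<in> F \<Longrightarrow> y \<in> F \<Longrightarrow> x * y \<in> F"
  and uminus_mem [simp]: "x \<in> F \<Longrightarrow> - x \<in> F"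
  using is_subfield unfolding is_subfield_def by blast+

lemma inverse_mem [simp]: "x \<in> F \<Longrightarrow> inverse x \<in> F"
  using is_subfield unfolding is_subfield_def by (cases "x = 0") auto

lemma diff_mem [simp]: "x \<in> F \<Longrightarrow> y \<in> F \<Longrightarrow> x - y \<in> F"
  using add_mem uminus_mem by (metis diff_conv_add_uminus)

lemma divide_mem [simp]: "x \<in> F \<Longrightarrow> y \<in> F \<Longrightarrow> x / y \<in> F"
  by (simp add: divide_inverse)

lemma power_mem [simp]: "x \<in> F \<Longrightarrow> x ^ n \<in> F"
  by (induction n) simp_all

lemma of_nat_mem [simp]: "of_nat n \<in> F"
  by (induction n) simp_all

lemma of_int_mem [simp]: "of_int k \<in> F"
  by (cases k rule: int_cases) simp_all

lemma of_rat_mem [simp]: "of_rat q \<in> F"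
proof -
  obtain a b where "(of_rat q :: complex) = of_int a / of_int b"
    using Rats_cases'[OF Rats_of_rat] by blast
  thus ?thesis by simp
qed

lemma numeral_mem [simp]: "numeral k \<in> F"
  using of_nat_mem[of "numeral k"] by simp

lemma poly_of_rat_mem: "x \<in> F \<Longrightarrow> poly (map_poly of_rat p) x \<in> F"
  by (induction p) (simp_all add: map_poly_pCons)

lemma ring_of_integers_add:
  "x \<in> ring_of_integers F \<Longrightarrow> y \<in> ring_of_integers F \<Longrightarrow> x + y \<in> ring_of_integers F"
  and ring_of_integers_mult:
  "x \<in> ring_of_integers F \<Longrightarrow> y \<in> ring_of_integers F \<Longrightarrow> x * y \<in> ring_of_integers F"
  unfolding ring_of_integers_def by (auto intro: algebraic_int_mult_add)

lemma coeff_eq_0_if_notin: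
  assumes "s \<notin> F" "p \<in> F" "q \<in> F" "p + q * s = 0"
  shows "q = 0"
proof (rule ccontr)
  assume "q \<noteq> 0"
  with assms(4) have "s = - p / q" by (simp add: field_simps add_eq_0_iff)
  with assms(1-3) show False by simp
qed

lemma quadratic_integer_power:
  assumes "t \<in> ring_of_integers F" "u \<in> ring_of_integers F" "s\<^sup>2 \<in> ring_of_integers F"
  shows "\<exists>a b. a \<in> ring_of_integers F \<and> b \<in> ring_of_integers F \<and>
           (t + u * s) ^ (n + 1) = a + b * s \<and> (t - u * s) ^ (n + 1) = a - b * s"
proof (induction n)
  case 0
  show ?case using assms by auto
next
  case (Suc n)
  then obtain a b where ab: "a \<in> ring_of_integers F" "b \<in> ring_of_integers F"
    "(t + u * s) ^ (n + 1) = a + b * s" "(t - u * s) ^ (n + 1) = a - b * s" by blast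
  define a' where "a' = a * t + b * u * s\<^sup>2"
  define b' where "b' = a * u + b * t"
  have "(t + u * s) ^ (Suc n + 1) = (a + b * s) * (t + u * s)"
    "(t - u * s) ^ (Suc n + 1) = (a - b * s) * (t - u * s)"
    by (simp_all only: ab(3,4)[symmetric] add_Suc power_Suc2)
  hence "(t + u * s) ^ (Suc n + 1) = a' + b' * s" "(t - u * s) ^ (Suc n + 1) = a' - b' * s"
    by (simp_all add: a'_def b'_def power2_eq_square algebra_simps)
  moreover have "a' \<in> ring_of_integers F" "b' \<in> ring_of_integers F"
    using ab(1,2) assms unfolding a'_def b'_def
    by (simp_all add: ring_of_integers_add ring_of_integers_mult)
  ultimately show ?case by blast
qed

end

lemma gen_field_add_inverse_subset: "gen_field {x + inverse x} \<subseteq> gen_field {x}"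
proof -
  interpret subfield "gen_field {x}" by unfold_locales (rule is_subfield_gen_field)
  have "x \<in> gen_field {x}" using gen_field_superset by blast
  thus ?thesis by (intro gen_field_least) (simp_all add: is_subfield)
qed

locale subfield_embedding = subfield +
  fixes \<tau> :: "complex \<Rightarrow> complex"
  assumes embedding: "field_embedding F \<tau>"
begin

lemma one [simp]: "\<tau> 1 = 1"
  and add: "x \<in> F \<Longrightarrow> y \<in> F \<Longrightarrow> \<tau> (x + y) = \<tau> x + \<tau> y"
  and mult: "x \<in> F \<Longrightarrow> y \<in> F \<Longrightarrow> \<tau> (x * y) = \<tau> x * \<tau> y"
  using embedding unfolding field_embedding_def by blast+

lemma zero [simp]: "\<tau> 0 = 0"
  using add[of 0 0] by simp

lemma uminus: "x \<in> F \<Longrightarrow> \<tau> (- x) = - \<tau> x"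
  using add[of x "- x"] by (simp add: eq_neg_iff_add_eq_0 add.commute)

lemma diff: "x \<in> F \<Longrightarrow> y \<in> F \<Longrightarrow> \<tau> (x - y) = \<tau> x - \<tau> y"
  using add[of x "- y"] uminus[of y] by simp

lemma power: "x \<in> F \<Longrightarrow> \<tau> (x ^ n) = \<tau> x ^ n"
  by (induction n) (simp_all add: mult)

lemma inverse: "x \<in> F \<Longrightarrow> \<tau> (inverse x) = inverse (\<tau> x)"
proof (cases "x = 0")
  case False
  assume "x \<in> F"
  hence "\<tau> x * \<tau> (inverse x) = 1" using False by (simp flip: mult)
  thus ?thesis by (metis inverse_unique)
qed simp

lemma eq_iff:
  assumes "x \<in> F" "y \<in> F"
  shows "\<tau> x = \<tau> y \<longleftrightarrow> x = y"
proof (rule iffI, rule ccontr)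
  assume "\<tau> x = \<tau> y" "x \<noteq> y"
  hence "\<tau> (x - y) * \<tau> (inverse (x - y)) = 1" using assms by (simp flip: mult)
  with \<open>\<tau> x = \<tau> y\<close> show False using assms by (simp add: diff)
qed simp

lemma subfield_fixed: "subfield {x \<in> F. \<tau> x = x}"
  unfolding subfield_def is_subfield_def by (auto simp: add mult uminus inverse)

lemma subfield_real_image: "subfield {x \<in> F. \<tau> x \<in> \<real>}"
  unfolding subfield_def is_subfield_def by (auto simp: add mult uminus inverse)

lemma of_rat [simp]: "\<tau> (of_rat q) = of_rat q"
  using subfield.of_rat_mem[OF subfield_fixed] by blast

lemma poly_of_rat: "x \<in> F \<Longrightarrow> \<tau> (poly (map_poly of_rat p) x) = poly (map_poly of_rat p) (\<tau> x)"
  by (induction p) (simp_all add: map_poly_pCons add mult poly_of_rat_mem)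

lemma half_trace_eq_Re:
  assumes "x \<in> F" "y \<in> F" "x + x = y + inverse y" "cmod (\<tau> y) = 1"
  shows "\<tau> x = of_real (Re (\<tau> y))"
proof -
  have "\<tau> x + \<tau> x = \<tau> y + inverse (\<tau> y)"
    using assms(1-3) by (metis add inverse inverse_mem)
  also have "inverse (\<tau> y) = cnj (\<tau> y)"
    using divide_conv_cnj[OF assms(4), of 1] by (simp add: inverse_eq_divide)
  finally show ?thesis by (simp add: complex_add_cnj complex_eq_iff)
qed

end

lemma subfield_embedding_gen_field:
  "field_embedding (gen_field A) \<tau> \<Longrightarrow> subfield_embedding (gen_field A) \<tau>"
  by unfold_locales (simp_all add: is_subfield_gen_field)

section \<open>Cosines of small multiples of an angle\<close>

(* For a = cos nu these are the squares of cos nu, cos 2nu and cos 3nu. *)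
lemma chebyshev_square_gt_half:
  fixes a :: real
  assumes "a\<^sup>2 \<noteq> 1 / 2"
  shows "a\<^sup>2 > 1 / 2 \<or> (2 * a\<^sup>2 - 1)\<^sup>2 > 1 / 2 \<or> (4 * a ^ 3 - 3 * a)\<^sup>2 > 1 / 2"
proof (rule ccontr)
  assume "\<not> ?thesis"
  hence "a\<^sup>2 < 1 / 2" "16 * a ^ 4 - 16 * a\<^sup>2 + 1 \<le> -1" "(4 * a ^ 3 - 3 * a)\<^sup>2 \<le> 1 / 2"
    using assms by (auto simp: power2_eq_square power4_eq_xxxx algebra_simps)
  moreover have "(4 * a ^ 3 - 3 * a)\<^sup>2 - 1 / 2 = (a\<^sup>2 - 1 / 2) * (16 * a ^ 4 - 16 * a\<^sup>2 + 1)"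
    by (simp add: power2_eq_square power3_eq_cube power4_eq_xxxx algebra_simps)
  ultimately show False using mult_neg_neg[of "a\<^sup>2 - 1 / 2" "16 * a ^ 4 - 16 * a\<^sup>2 + 1"] by linarith
qed

lemma unit_circle_Re_power_square_gt_half:
  fixes z :: complex
  assumes "cmod z = 1" "z ^ 4 \<noteq> -1"
  shows "\<exists>m \<in> {0, 1, 2::nat}. (Re (z ^ (m + 1)))\<^sup>2 > 1 / 2"
proof -
  define a b where "a = Re z" and "b = Im z"
  have z: "z = Complex a b" by (simp add: a_def b_def)
  have b: "b\<^sup>2 = 1 - a\<^sup>2" using assms(1) by (simp add: z cmod_def power2_eq_square)
  have "Re (z ^ 2) = a\<^sup>2 - b\<^sup>2" "Re (z ^ 3) = a ^ 3 - 3 * a * b\<^sup>2"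
    by (simp_all add: z power2_eq_square power3_eq_cube algebra_simps)
  hence Re2: "Re (z ^ 2) = 2 * a\<^sup>2 - 1" and Re3: "Re (z ^ 3) = 4 * a ^ 3 - 3 * a"
    unfolding b by (simp_all add: algebra_simps power2_eq_square power3_eq_cube)
  have "a\<^sup>2 \<noteq> 1 / 2"
  proof
    assume a2: "a\<^sup>2 = 1 / 2"
    with b have b2: "b\<^sup>2 = 1 / 2" by simp
    have "(2 * a * b)\<^sup>2 = (2 * a\<^sup>2) * (2 * b\<^sup>2)" by (simp add: power2_eq_square algebra_simps)
    also have "\<dots> = 1" unfolding a2 b2 by simp
    finally have ab: "(2 * a * b)\<^sup>2 = 1" .
    have "z ^ 4 = (z\<^sup>2)\<^sup>2" by (simp flip: power_mult)
    also have "z\<^sup>2 = of_real (2 * a * b) * \<i>"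
      using a2 b2 by (simp add: z complex_eq_iff power2_eq_square)
    also have "(of_real c * \<i>)\<^sup>2 = - of_real (c\<^sup>2)" for c :: real
      by (simp add: power_mult_distrib)
    also have "- of_real ((2 * a * b)\<^sup>2) = (-1 :: complex)" using ab by simp
    finally have "z ^ 4 = -1" .
    with assms(2) show False ..
  qed
  then have "(Re (z ^ 1))\<^sup>2 > 1 / 2 \<or> (Re (z ^ 2))\<^sup>2 > 1 / 2 \<or> (Re (z ^ 3))\<^sup>2 > 1 / 2"
    using chebyshev_square_gt_half[of a] unfolding Re2 Re3 by (simp add: a_def)
  then show ?thesis
    by (metis insertCI add_0 one_add_one numeral_plus_one semiring_norm(5))
qed


section \<open>Salem numbers\<close>

lemma salem_embedding_power_neq:
  assumes "salem_number \<mu>" "field_embedding (gen_field {\<mu>}) \<tau>" "n > 0"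
  shows "\<tau> \<mu> ^ n \<noteq> 1" "\<tau> \<mu> ^ n \<noteq> -1"
proof -
  interpret subfield_embedding "gen_field {\<mu>}" \<tau>
    using assms(2) by (rule subfield_embedding_gen_field)
  have \<mu>: "\<mu> \<in> gen_field {\<mu>}" using gen_field_superset by blast
  obtain r where r: "\<mu> = of_real r" "r > 1"
    using assms(1) unfolding salem_number_def by (auto elim: Reals_cases)
  have "r ^ n > 1" using r(2) assms(3) by (simp add: one_less_power)
  hence "\<mu> ^ n \<noteq> 1" "\<mu> ^ n \<noteq> -1"
    unfolding r(1) by (auto simp: complex_eq_iff simp flip: of_real_power)
  thus "\<tau> \<mu> ^ n \<noteq> 1" "\<tau> \<mu> ^ n \<noteq> -1"
    using eq_iff[of "\<mu> ^ n" 1] eq_iff[of "\<mu> ^ n" "-1"] \<mu> by (simp_all add: power uminus)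
qed

lemma salem_embedding_norm:
  assumes salem: "salem_number \<mu>" and emb: "field_embedding (gen_field {\<mu>}) \<tau>"
    and nontriv: "\<exists>x \<in> gen_field {\<mu> + inverse \<mu>}. \<tau> x \<noteq> x"
  shows "cmod (\<tau> \<mu>) = 1"
proof -
  interpret subfield_embedding "gen_field {\<mu>}" \<tau>
    using emb by (rule subfield_embedding_gen_field)
  have \<mu>: "\<mu> \<in> gen_field {\<mu>}" using gen_field_superset by blast
  obtain p where p: "min_poly_rat p \<mu>"
    using salem unfolding salem_number_def conjugates_def by blast
  have "poly (map_poly of_rat p) (\<tau> \<mu>) = 0"
    using p poly_of_rat[OF \<mu>, of p] unfolding min_poly_rat_def by simp
  with p have conj: "\<tau> \<mu> \<in> conjugates \<mu>" unfolding conjugates_def by blast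
  have "\<tau> \<mu> \<noteq> \<mu> \<and> \<tau> \<mu> \<noteq> inverse \<mu>"
  proof (rule ccontr)
    assume "\<not> ?thesis"
    hence "\<tau> (\<mu> + inverse \<mu>) = \<mu> + inverse \<mu>" using \<mu> by (auto simp: add inverse)
    hence "gen_field {\<mu> + inverse \<mu>} \<subseteq> {x \<in> gen_field {\<mu>}. \<tau> x = x}"
      using \<mu> subfield_fixed by (intro gen_field_least) (simp_all add: subfield_def)
    with nontriv show False by blast
  qed
  with salem conj show ?thesis unfolding salem_number_def by blast
qed

lemma salem_embedding_not_real:
  assumes "salem_number \<mu>" "field_embedding (gen_field {\<mu>}) \<tau>"
    and "\<exists>x \<in> gen_field {\<mu> + inverse \<mu>}. \<tau> x \<noteq> x"
  shows "\<tau> \<mu> \<notin> \<real>"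
proof
  assume "\<tau> \<mu> \<in> \<real>"
  then obtain x where x: "\<tau> \<mu> = of_real x" by (auto elim: Reals_cases)
  with salem_embedding_norm[OF assms] have "\<bar>x\<bar> = 1" by simp
  hence "x\<^sup>2 = 1" by (metis power2_abs one_power2)
  hence "\<tau> \<mu> ^ 2 = 1" by (simp add: x flip: of_real_power)
  with salem_embedding_power_neq(1)[OF assms(1,2), of 2] show False by simp
qed

lemma salem_inverse_eq_quadratic_conjugate:
  assumes salem: "salem_number \<mu>" and emb: "field_embedding (gen_field {\<mu>}) \<tau>"
    and nontriv: "\<exists>x \<in> gen_field {\<mu> + inverse \<mu>}. \<tau> x \<noteq> x"
    and t_u_s: "t \<in> gen_field {\<mu> + inverse \<mu>}" "u \<in> gen_field {\<mu> + inverse \<mu>}"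
      "s\<^sup>2 \<in> gen_field {\<mu> + inverse \<mu>}"
    and ext: "gen_field {\<mu>} = gen_field (gen_field {\<mu> + inverse \<mu>} \<union> {s})"
    and \<mu>_eq: "\<mu> = t + u * s"
  shows "inverse \<mu> = t - u * s"
proof -
  interpret F: subfield_embedding "gen_field {\<mu>}" \<tau>
    using emb by (rule subfield_embedding_gen_field)
  define c where "c = \<mu> + inverse \<mu>"
  define K where "K = gen_field {c}"
  interpret K: subfield K
    unfolding K_def by unfold_locales (rule is_subfield_gen_field)
  have K: "t \<in> K" "u \<in> K" "s\<^sup>2 \<in> K" using t_u_s unfolding K_def c_def .
  have \<mu>: "\<mu> \<in> gen_field {\<mu>}" "\<mu> \<noteq> 0"
    using gen_field_superset salem by (auto simp: salem_number_def)
  have "inverse (\<tau> \<mu>) = cnj (\<tau> \<mu>)"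
    using divide_conv_cnj[OF salem_embedding_norm[OF salem emb nontriv], of 1]
    by (simp add: inverse_eq_divide)
  hence "\<tau> c = \<tau> \<mu> + cnj (\<tau> \<mu>)"
    using \<mu> by (simp add: c_def F.add F.inverse)
  hence "\<tau> c \<in> \<real>" by (simp add: complex_add_cnj)
  hence "K \<subseteq> {x \<in> gen_field {\<mu>}. \<tau> x \<in> \<real>}"
    using \<mu> F.subfield_real_image unfolding K_def
    by (intro gen_field_least) (simp_all add: subfield_def c_def)
  hence \<mu>_K: "\<mu> \<notin> K"
    using salem_embedding_not_real[OF salem emb nontriv] by auto
  have "s \<notin> K"
  proof
    assume "s \<in> K"
    hence "gen_field {\<mu>} \<subseteq> K"
      unfolding ext by (intro gen_field_least) (simp_all add: K.is_subfield flip: c_def K_def)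
    with \<mu> \<mu>_K show False by blast
  qed
  have "c \<in> K" unfolding K_def using gen_field_superset by blast
  have "(t\<^sup>2 + u\<^sup>2 * s\<^sup>2 - c * t + 1) + u * (2 * t - c) * s = \<mu>\<^sup>2 - c * \<mu> + 1"
    unfolding \<mu>_eq by (simp add: power2_eq_square algebra_simps)
  also have "\<dots> = 0"
    using \<mu>(2) unfolding c_def by (simp add: power2_eq_square algebra_simps)
  finally have "t\<^sup>2 + u\<^sup>2 * s\<^sup>2 - c * t + 1 + u * (2 * t - c) * s = 0" .
  then have "u * (2 * t - c) = 0"
    by (rule K.coeff_eq_0_if_notin[OF \<open>s \<notin> K\<close>, rotated 2]) (simp_all add: K \<open>c \<in> K\<close>)
  moreover have "u \<noteq> 0" using K(1) \<mu>_K \<mu>_eq by auto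
  ultimately have "c = 2 * t" by simp
  have "inverse \<mu> = c - \<mu>" unfolding c_def by simp
  also have "\<dots> = t - u * s" unfolding \<open>c = 2 * t\<close> \<mu>_eq by simp
  finally show ?thesis .
qed

lemma salem_power_coordinates:
  assumes salem: "salem_number \<mu>" and emb: "field_embedding (gen_field {\<mu>}) \<tau>"
    and nontriv: "\<exists>x \<in> gen_field {\<mu> + inverse \<mu>}. \<tau> x \<noteq> x"
    and t_u_s: "t \<in> ring_of_integers (gen_field {\<mu> + inverse \<mu>})"
      "u \<in> ring_of_integers (gen_field {\<mu> + inverse \<mu>})"
      "s\<^sup>2 \<in> ring_of_integers (gen_field {\<mu> + inverse \<mu>})"
    and ext: "gen_field {\<mu>} = gen_field (gen_field {\<mu> + inverse \<mu>} \<union> {s})"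
    and \<mu>_eq: "\<mu> = t + u * s"
  shows "\<exists>a b. a \<in> ring_of_integers (gen_field {\<mu> + inverse \<mu>}) \<and>
           b \<in> ring_of_integers (gen_field {\<mu> + inverse \<mu>}) \<and>
           \<mu> ^ (n + 1) = a + b * s \<and> \<tau> a = of_real (Re (\<tau> \<mu> ^ (n + 1)))"
proof -
  define K where "K = gen_field {\<mu> + inverse \<mu>}"
  interpret F: subfield_embedding "gen_field {\<mu>}" \<tau>
    using emb by (rule subfield_embedding_gen_field)
  interpret K: subfield K
    unfolding K_def by unfold_locales (rule is_subfield_gen_field)
  have \<mu>: "\<mu> \<in> gen_field {\<mu>}" using gen_field_superset by blast
  have "inverse \<mu> = t - u * s"
    using salem_inverse_eq_quadratic_conjugate[OF salem emb nontriv _ _ _ ext \<mu>_eq] t_u_s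
    unfolding ring_of_integers_def by blast
  with K.quadratic_integer_power[OF t_u_s[folded K_def]]
  obtain a b where ab: "a \<in> ring_of_integers K" "b \<in> ring_of_integers K"
    "\<mu> ^ (n + 1) = a + b * s" "inverse \<mu> ^ (n + 1) = a - b * s"
    unfolding \<mu>_eq by metis
  have "\<tau> a = of_real (Re (\<tau> (\<mu> ^ (n + 1))))"
  proof (rule F.half_trace_eq_Re)
    show "a \<in> gen_field {\<mu>}"
      using ab(1) gen_field_add_inverse_subset unfolding K_def ring_of_integers_def by blast
    have "inverse (\<mu> ^ (n + 1)) = a - b * s" using ab(4) by (simp only: power_inverse)
    with ab(3) show "a + a = \<mu> ^ (n + 1) + inverse (\<mu> ^ (n + 1))" by simp
    show "cmod (\<tau> (\<mu> ^ (n + 1))) = 1"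
      unfolding F.power[OF \<mu>] norm_power salem_embedding_norm[OF salem emb nontriv] by simp
  qed (simp add: \<mu>)
  with ab show ?thesis unfolding K_def F.power[OF \<mu>] by blast
qed

theorem proposition5p4:
  fixes \<mu> :: complex and \<tau> :: "complex \<Rightarrow> complex" and D s t u :: complex
  assumes salem: "salem_number \<mu>"
    and deg4: "alg_degree \<mu> = 4"
    and emb: "field_embedding (gen_field {\<mu>}) \<tau>"
    and nontriv: "\<exists>x \<in> gen_field {\<mu> + inverse \<mu>}. \<tau> x \<noteq> x"
    and D: "D \<in> ring_of_integers (gen_field {\<mu> + inverse \<mu>})"
    and s: "s\<^sup>2 = D"
    and ext: "gen_field {\<mu>} = gen_field (gen_field {\<mu> + inverse \<mu>} \<union> {s})"
    and t: "t \<in> ring_of_integers (gen_field {\<mu> + inverse \<mu>})"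
    and u: "u \<in> ring_of_integers (gen_field {\<mu> + inverse \<mu>})"
    and mu: "\<mu> = t + u * s"
  shows "\<exists>m \<in> {0, 1, 2::nat}. \<exists>tm um.
           tm \<in> ring_of_integers (gen_field {\<mu> + inverse \<mu>}) \<and>
           um \<in> ring_of_integers (gen_field {\<mu> + inverse \<mu>}) \<and>
           \<mu> ^ (m + 1) = tm + um * s \<and>
           \<tau> tm \<in> \<real> \<and> (Re (\<tau> tm))\<^sup>2 > 1 / 2"
proof -
  have z: "cmod (\<tau> \<mu>) = 1" "\<tau> \<mu> ^ 4 \<noteq> -1"
    using salem_embedding_norm[OF salem emb nontriv] salem_embedding_power_neq[OF salem emb]
    by simp_all
  then obtain m where m: "m \<in> {0, 1, 2}" "(Re (\<tau> \<mu> ^ (m + 1)))\<^sup>2 > 1 / 2"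
    using unit_circle_Re_power_square_gt_half by blast
  obtain tm um where tm: "tm \<in> ring_of_integers (gen_field {\<mu> + inverse \<mu>})"
      "um \<in> ring_of_integers (gen_field {\<mu> + inverse \<mu>})"
      "\<mu> ^ (m + 1) = tm + um * s" "\<tau> tm = of_real (Re (\<tau> \<mu> ^ (m + 1)))"
    using salem_power_coordinates[OF salem emb nontriv t u _ ext mu] D s by blast
  hence "\<tau> tm \<in> \<real>" "(Re (\<tau> tm))\<^sup>2 > 1 / 2" using m(2) by simp_all
  with m(1) tm(1-3) show ?thesis by blast
qed

end
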